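(* Let $n$ be a nonzero integer and let $a<b<c$ be positive integers with $ac>n$, such that $ac+n=s^2$ and $bc+n=t^2$ for nonnegative integers $s,t$. Put $\theta_1=\sqrt{1+\frac{n}{ac}}$ and $\theta_2=\sqrt{1+\frac{n}{bc}}$. Then every solution in positive integers $x,y,z$ of the system \[ az^2-cx^2=n(a-c),\qquad bz^2-cy^2=n(b-c) \] satisfies \[ \max\Big(\Big|\theta_1-\frac{sbx}{abz}\Big|,\ \Big|\theta_2-\frac{tay}{abz}\Big|\Big)<\frac{c\,|n|}{a}\,z^{-2}. \] *)

theory Defs
  imports Complex_Main
begin

end

theory Submission
  imports Defs
begin

text \<open>With \<open>r = sqrt (a c)\<close> we have \<open>\<theta>\<^sub>1 = s / r\<close>, and the equation
  \<open>a z\<^sup>2 - c x\<^sup>2 = n (a - c)\<close> factors as \<open>(a z - x r) (a z + x r) = a n (a - c)\<close>.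
  Hence \<open>\<theta>\<^sub>1 - s x / (a z) = s (a z - x r) / (r a z) = s n (a - c) / (r z (a z + x r))\<close>,
  and the bound follows from \<open>s a z < r (a z + x r)\<close>: if \<open>n \<le> 0\<close> then \<open>s \<le> r\<close>, while
  if \<open>n > 0\<close> then \<open>s < 2 r\<close> and \<open>x r > a z\<close>. The same argument with \<open>b\<close> in place of
  \<open>a\<close> bounds the second difference by \<open>c |n| / (b z\<^sup>2) \<le> c |n| / (a z\<^sup>2)\<close>.\<close>

lemma sqrt_one_plus_divide_eq:
  fixes p n s :: real
  assumes "0 < p" and "0 \<le> s" and "p + n = s\<^sup>2"
  shows "sqrt (1 + n / p) = s / sqrt p"
proof -
  have "1 + n / p = (s / sqrt p)\<^sup>2"
    using assms by (simp add: power_divide field_simps)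
  then show ?thesis
    using assms by simp
qed

lemma abs_diff_approximation_eq:
  fixes a c n r s x z :: real
  assumes "0 < a" and "0 < r" and "0 \<le> x" and "0 < z"
    and r_sq: "r\<^sup>2 = a * c"
    and pell: "a * z\<^sup>2 - c * x\<^sup>2 = n * (a - c)"
  shows "\<bar>s / r - s * x / (a * z)\<bar> = \<bar>s\<bar> * \<bar>n\<bar> * \<bar>c - a\<bar> / (r * z * (a * z + x * r))"
proof -
  define d where "d = a * z + x * r"
  have "0 < d"
    unfolding d_def using assms by (simp add: add_pos_nonneg)
  have "(a * z - x * r) * d = a * (a * z\<^sup>2 - c * x\<^sup>2)"
    unfolding d_def using r_sq by (simp add: algebra_simps power2_eq_square)
  then have factor: "a * z - x * r = a * n * (a - c) / d"
    using pell \<open>0 < d\<close> by (simp add: field_simps)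
  have "s / r - s * x / (a * z) = s * (a * z - x * r) / (r * a * z)"
    using assms by (simp add: field_simps)
  also have "\<dots> = s * n * (a - c) / (r * z * d)"
    unfolding factor using assms \<open>0 < d\<close> by (simp add: field_simps)
  finally show ?thesis
    unfolding d_def[symmetric] using assms \<open>0 < d\<close> by (simp add: abs_mult abs_minus_commute)
qed

lemma approximation_denominator_bound:
  fixes a c n r s x z :: real
  assumes "0 < a" and "a < c" and "n < a * c" and "0 < r" and "0 \<le> s" and "0 < x" and "0 < z"
    and r_sq: "r\<^sup>2 = a * c" and s_sq: "a * c + n = s\<^sup>2"
    and pell: "a * z\<^sup>2 - c * x\<^sup>2 = n * (a - c)"
  shows "s * (a * z) < r * (a * z + x * r)"
proof (cases "n \<le> 0")
  case True
  then have "s\<^sup>2 \<le> r\<^sup>2"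
    using r_sq s_sq by linarith
  then have "s \<le> r"
    using \<open>0 < r\<close> by (auto intro: power2_le_imp_le)
  then have "s * (a * z) \<le> r * (a * z)"
    using assms by (intro mult_right_mono) auto
  also have "\<dots> < r * (a * z + x * r)"
    using assms by simp
  finally show ?thesis .
next
  case False
  have "(2 * r)\<^sup>2 = 4 * (a * c)"
    using r_sq by (simp add: power_mult_distrib)
  moreover have "0 < a * c"
    using \<open>0 < a\<close> \<open>a < c\<close> by simp
  ultimately have "s\<^sup>2 < (2 * r)\<^sup>2"
    using s_sq \<open>n < a * c\<close> by linarith
  then have "s < 2 * r"
    using \<open>0 < r\<close> by (auto intro: power2_less_imp_less)
  have "0 < n * (c - a)"
    using False \<open>a < c\<close> by simp
  then have "a * z\<^sup>2 < c * x\<^sup>2"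
    using pell by (simp add: algebra_simps)
  then have "(a * z)\<^sup>2 < (x * r)\<^sup>2"
    using r_sq \<open>0 < a\<close> unfolding power_mult_distrib by (simp add: power2_eq_square algebra_simps)
  then have "a * z < x * r"
    using assms by (simp add: power2_less_imp_less)
  have "s * (a * z) < 2 * r * (a * z)"
    using \<open>s < 2 * r\<close> assms by simp
  also have "\<dots> < r * (a * z + x * r)"
    using \<open>a * z < x * r\<close> assms by simp
  finally show ?thesis .
qed

lemma pellian_approximation_bound:
  fixes a c n s x z :: real
  assumes "n \<noteq> 0" and "0 < a" and "a < c" and "n < a * c" and "0 \<le> s" and "0 < x" and "0 < z"
    and s_sq: "a * c + n = s\<^sup>2"
    and pell: "a * z\<^sup>2 - c * x\<^sup>2 = n * (a - c)"
  shows "\<bar>sqrt (1 + n / (a * c)) - s * x / (a * z)\<bar> < c * \<bar>n\<bar> / (a * z\<^sup>2)"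
proof -
  define r where "r = sqrt (a * c)"
  have "0 < a * c"
    using assms by simp
  then have r: "0 < r" "r\<^sup>2 = a * c"
    unfolding r_def by simp_all
  have "sqrt (1 + n / (a * c)) = s / r"
    unfolding r_def using \<open>0 < a * c\<close> assms by (intro sqrt_one_plus_divide_eq) auto
  then have err: "\<bar>sqrt (1 + n / (a * c)) - s * x / (a * z)\<bar>
      = s * \<bar>n\<bar> * (c - a) / (r * z * (a * z + x * r))"
    using abs_diff_approximation_eq[of a r x z c n s] assms r by simp
  have "s * (c - a) * (a * z) \<le> c * (s * (a * z))"
    using assms by (simp add: algebra_simps)
  also have "\<dots> < c * (r * (a * z + x * r))"
    using approximation_denominator_bound[of a c n r s x z] assms r by simp
  finally have "\<bar>n\<bar> * z * (s * (c - a) * (a * z)) < \<bar>n\<bar> * z * (c * (r * (a * z + x * r)))"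
    using assms by simp
  then show ?thesis
    unfolding err using assms r
    by (simp add: divide_simps add_pos_pos power2_eq_square algebra_simps)
qed

theorem lemma1:
  fixes n a b c s t x y z :: int
  assumes "n \<noteq> 0"
    and "0 < a" and "a < b" and "b < c"
    and "a * c > n"
    and "s \<ge> 0" and "t \<ge> 0"
    and "a * c + n = s^2" and "b * c + n = t^2"
    and "x > 0" and "y > 0" and "z > 0"
    and "a * z^2 - c * x^2 = n * (a - c)"
    and "b * z^2 - c * y^2 = n * (b - c)"
  shows "max \<bar>sqrt (1 + real_of_int n / real_of_int (a * c)) - real_of_int (s * b * x) / real_of_int (a * b * z)\<bar>
             \<bar>sqrt (1 + real_of_int n / real_of_int (b * c)) - real_of_int (t * a * y) / real_of_int (a * b * z)\<bar>
         < real_of_int (c * \<bar>n\<bar>) / real_of_int a * real_of_int z powi (-2)"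
proof -
  let ?bound = "\<lambda>d. real_of_int (c * \<bar>n\<bar>) / real_of_int (d * z\<^sup>2)"
  have first: "\<bar>sqrt (1 + real_of_int n / real_of_int (a * c)) - real_of_int (s * x) / real_of_int (a * z)\<bar>
      < ?bound a"
    using pellian_approximation_bound[of "of_int n" "of_int a" "of_int c" "of_int s" "of_int x" "of_int z"] assms
    by (simp flip: of_int_mult of_int_power of_int_diff of_int_add of_int_abs)
  have "a * c < b * c"
    using assms by (intro mult_strict_right_mono) auto
  then have "n < b * c"
    using assms by linarith
  have "\<bar>sqrt (1 + real_of_int n / real_of_int (b * c)) - real_of_int (t * y) / real_of_int (b * z)\<bar>
      < ?bound b"
    using pellian_approximation_bound[of "of_int n" "of_int b" "of_int c" "of_int t" "of_int y" "of_int z"] assms \<open>n < b * c\<close>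
    by (simp flip: of_int_mult of_int_power of_int_diff of_int_add of_int_abs)
  also have "?bound b \<le> ?bound a"
    using assms by (intro divide_left_mono) (auto simp: mult_right_mono)
  finally have second: "\<bar>sqrt (1 + real_of_int n / real_of_int (b * c)) - real_of_int (t * y) / real_of_int (b * z)\<bar>
      < ?bound a" .
  have "real_of_int (s * b * x) / real_of_int (a * b * z) = real_of_int (s * x) / real_of_int (a * z)"
    and "real_of_int (t * a * y) / real_of_int (a * b * z) = real_of_int (t * y) / real_of_int (b * z)"
    and "real_of_int (c * \<bar>n\<bar>) / real_of_int a * real_of_int z powi (-2) = ?bound a"
    using assms by (simp_all add: power_int_minus field_simps)
  then show ?thesis
    using first second by simp
qed

end
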